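(* Let $\Phi=(A;A^*;\{E_i\}_{i=0}^d;\{E^*_i\}_{i=0}^d)$ be a Leonard system in $\mathcal A$, with scalars $x_i$ and polynomials $p_i$ as defined below. Then $x_1,\dots,x_d$ are nonzero and $$E^*_i=\frac{p_i(A)E^*_0p_i(A)}{x_1x_2\cdots x_i}\qquad(0\le i\le d).$$
   Context: Let $\mathbb K$ be a field, $d\ge 0$ an integer, and $\mathcal A$ a $\mathbb K$-algebra isomorphic to $\mathrm{Mat}_{d+1}(\mathbb K)$, with identity $I$ and trace $\mathrm{tr}$. An element $A\in\mathcal A$ is multiplicity-free if it has $d+1$ mutually distinct eigenvalues in $\mathbb K$; if $\theta_0,\dots,\theta_d$ is an ordering of them, the primitive idempotent of $A$ associated with $\theta_i$ is $E_i=\prod_{j\ne i}(A-\theta_jI)/(\theta_i-\theta_j)$. A Leonard system in $\mathcal A$ is a sequence $\Phi=(A;A^*;\{E_i\}_{i=0}^d;\{E^*_i\}_{i=0}^d)$ such that: (i) $A,A^*$ are multiplicity-free; (ii) $E_0,\dots,E_d$ is an ordering of the primitive idempotents of $A$; (iii) $E^*_0,\dots,E^*_d$ is an ordering of those of $A^*$; (iv) $E_iA^*E_j=0$ if $|i-j|>1$ and $\ne0$ if $|i-j|=1$ $(0\le i,j\le d)$; (v) $E^*_iAE^*_j=0$ if $|i-j|>1$ and $\neq0$ if $|i-j|=1$ $(0\le i,j\le d)$. Define $a_i=\mathrm{tr}(E^*_iA)$ $(0\le i\le d)$, $x_i=\mathrm{tr}(E^*_iAE^*_{i-1}A)$ $(1\le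 i\le d)$, $x_0=0$, and polynomials $p_0,\dots,p_{d+1}\in\mathbb K[\lambda]$ by $p_0=1$, $p_{-1}=0$, $\lambda p_i=p_{i+1}+a_ip_i+x_ip_{i-1}$ $(0\le i\le d)$. The empty product $x_1\cdots x_0$ equals $1$. *)

theory Defs
  imports "Jordan_Normal_Form.Char_Poly"
begin

text \<open>The algebra is realised concretely as the algebra of (d+1)x(d+1) matrices over
  the field 'a (type class field), i.e. carrier_mat (Suc d) (Suc d).\<close>

definition mat_trace :: "'a :: comm_ring_1 mat \<Rightarrow> 'a" where
  "mat_trace M = (\<Sum>i<dim_row M. M $$ (i, i))"

definition poly_mat :: "nat \<Rightarrow> 'a :: comm_ring_1 poly \<Rightarrow> 'a mat \<Rightarrow> 'a mat" where
  "poly_mat n p M = fold_coeffs (\<lambda>c B. c \<cdot>\<^sub>m 1\<^sub>m n + M * B) p (0\<^sub>m n n)"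

definition mult_free :: "nat \<Rightarrow> 'a :: field mat \<Rightarrow> bool" where
  "mult_free d M \<longleftrightarrow> M \<in> carrier_mat (Suc d) (Suc d) \<and> card {k. eigenvalue M k} = Suc d"

definition prim_idem :: "nat \<Rightarrow> 'a :: field mat \<Rightarrow> (nat \<Rightarrow> 'a) \<Rightarrow> nat \<Rightarrow> 'a mat" where
  "prim_idem d M \<theta> i =
     (1 / (\<Prod>j\<in>{0..d} - {i}. (\<theta> i - \<theta> j))) \<cdot>\<^sub>m
       foldr (\<lambda>j B. (M - \<theta> j \<cdot>\<^sub>m 1\<^sub>m (Suc d)) * B) (filter (\<lambda>j. j \<noteq> i) [0..<Suc d]) (1\<^sub>m (Suc d))"

definition idem_ordering :: "nat \<Rightarrow> 'a :: field mat \<Rightarrow> (nat \<Rightarrow> 'a mat) \<Rightarrow> bool" where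
  "idem_ordering d M E \<longleftrightarrow>
     (\<exists>\<theta>. inj_on \<theta> {0..d} \<and> (\<forall>i\<le>d. eigenvalue M (\<theta> i)) \<and>
          (\<forall>i\<le>d. E i = prim_idem d M \<theta> i))"

definition leonard_system ::
  "nat \<Rightarrow> 'a :: field mat \<Rightarrow> 'a mat \<Rightarrow> (nat \<Rightarrow> 'a mat) \<Rightarrow> (nat \<Rightarrow> 'a mat) \<Rightarrow> bool" where
  "leonard_system d A As E Es \<longleftrightarrow>
     mult_free d A \<and> mult_free d As \<and>
     idem_ordering d A E \<and> idem_ordering d As Es \<and>
     (\<forall>i\<le>d. \<forall>j\<le>d.
        (i + 1 < j \<or> j + 1 < i \<longrightarrow> E i * As * E j = 0\<^sub>m (Suc d) (Suc d)) \<and>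
        (i = j + 1 \<or> j = i + 1 \<longrightarrow> E i * As * E j \<noteq> 0\<^sub>m (Suc d) (Suc d))) \<and>
     (\<forall>i\<le>d. \<forall>j\<le>d.
        (i + 1 < j \<or> j + 1 < i \<longrightarrow> Es i * A * Es j = 0\<^sub>m (Suc d) (Suc d)) \<and>
        (i = j + 1 \<or> j = i + 1 \<longrightarrow> Es i * A * Es j \<noteq> 0\<^sub>m (Suc d) (Suc d)))"

definition ls_a :: "'a :: field mat \<Rightarrow> (nat \<Rightarrow> 'a mat) \<Rightarrow> nat \<Rightarrow> 'a" where
  "ls_a A Es i = mat_trace (Es i * A)"

definition ls_x :: "'a :: field mat \<Rightarrow> (nat \<Rightarrow> 'a mat) \<Rightarrow> nat \<Rightarrow> 'a" where
  "ls_x A Es i = (if i = 0 then 0 else mat_trace (Es i * A * Es (i - 1) * A))"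

text \<open>p_0 = 1, p_(-1) = 0, lambda p_i = p_(i+1) + a_i p_i + x_i p_(i-1).\<close>
fun ls_p :: "(nat \<Rightarrow> 'a :: field) \<Rightarrow> (nat \<Rightarrow> 'a) \<Rightarrow> nat \<Rightarrow> 'a poly" where
  "ls_p a x 0 = 1"
| "ls_p a x (Suc 0) = [:- a 0, 1:]"
| "ls_p a x (Suc (Suc i)) = [:- a (Suc i), 1:] * ls_p a x (Suc i) - [: x (Suc i) :] * ls_p a x i"

end

theory Submission
  imports Defs
begin

text \<open>Choose a basis of eigenvectors of A* ordered like E*_0, ..., E*_d. In it every E*_i
  becomes the matrix unit e_ii, and A becomes a matrix B with E*_i A E*_j corresponding to
  B(i,j) e_ij. The Leonard conditions therefore make B tridiagonal with nonzero sub- and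
  superdiagonal, and taking traces gives a_i = B(i,i) and x_i = B(i,i-1) B(i-1,i), which is
  nonzero. For such a B the three-term recurrence of the p_i yields
  p_i(B) e_0 = B(1,0) B(2,1) ... B(i,i-1) e_i and, dually,
  e_0^T p_i(B) = B(0,1) B(1,2) ... B(i-1,i) e_i^T; hence p_i(B) e_00 p_i(B) = x_1 ... x_i e_ii.\<close>

section \<open>Polynomials evaluated at matrices\<close>

lemma poly_mat_0 [simp]: "poly_mat n 0 M = 0\<^sub>m n n"
  by (simp add: poly_mat_def)

lemma poly_mat_pCons:
  assumes "M \<in> carrier_mat n n"
  shows "poly_mat n (pCons a p) M = a \<cdot>\<^sub>m 1\<^sub>m n + M * poly_mat n p M"
  by (cases "p = 0"; cases "a = 0") (use assms in \<open>auto simp: poly_mat_def\<close>)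

lemma poly_mat_carrier [simp]:
  assumes "M \<in> carrier_mat n n"
  shows "poly_mat n p M \<in> carrier_mat n n"
  by (induct p rule: pCons_induct) (use assms in \<open>auto simp: poly_mat_pCons\<close>)

lemma poly_mat_dim [simp]:
  assumes "M \<in> carrier_mat n n"
  shows "dim_row (poly_mat n p M) = n" "dim_col (poly_mat n p M) = n"
  using poly_mat_carrier[OF assms] by auto

lemma poly_mat_1:
  assumes "M \<in> carrier_mat n n"
  shows "poly_mat n 1 M = 1\<^sub>m n"
  using poly_mat_pCons[OF assms, of 1 0] assms by (auto simp: one_pCons intro!: eq_matI)

lemma poly_mat_add:
  assumes M: "M \<in> carrier_mat n n"
  shows "poly_mat n (p + q) M = poly_mat n p M + poly_mat n q M"
proof (induct p q rule: poly_induct2)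
  case (pCons a p b q)
  have P: "poly_mat n p M \<in> carrier_mat n n" "poly_mat n q M \<in> carrier_mat n n"
    using M by auto
  show ?case
    unfolding add_pCons poly_mat_pCons[OF M] pCons mult_add_distrib_mat[OF M P]
    by (intro eq_matI) (use M P in \<open>auto simp: algebra_simps\<close>)
qed simp

lemma poly_mat_smult:
  assumes M: "M \<in> carrier_mat n n"
  shows "poly_mat n (Polynomial.smult c p) M = c \<cdot>\<^sub>m poly_mat n p M"
proof (induct p rule: pCons_induct)
  case (pCons a p)
  have P: "poly_mat n p M \<in> carrier_mat n n"
    using M by auto
  show ?case
    unfolding smult_pCons poly_mat_pCons[OF M] pCons mult_smult_distrib[OF M P]
    by (intro eq_matI) (use M P in \<open>auto simp: algebra_simps\<close>)
qed (auto intro!: eq_matI)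

lemma poly_mat_commute:
  assumes M: "M \<in> carrier_mat n n"
  shows "M * poly_mat n p M = poly_mat n p M * M"
proof (induct p rule: pCons_induct)
  case (pCons a p)
  have P: "poly_mat n p M \<in> carrier_mat n n"
    using M by auto
  have scalar: "M * (a \<cdot>\<^sub>m 1\<^sub>m n) = (a \<cdot>\<^sub>m 1\<^sub>m n) * M"
    using M
    by (simp add: mult_smult_distrib[OF M one_carrier_mat] mult_smult_assoc_mat[OF one_carrier_mat M])
  have IH: "M * (M * poly_mat n p M) = (M * poly_mat n p M) * M"
    using M P pCons(2) by (simp add: assoc_mult_mat[of _ n n _ n _ n, symmetric])
  have "M * poly_mat n (pCons a p) M = M * (a \<cdot>\<^sub>m 1\<^sub>m n) + M * (M * poly_mat n p M)"
    unfolding poly_mat_pCons[OF M] by (rule mult_add_distrib_mat[OF M]) (use M P in auto)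
  also have "\<dots> = (a \<cdot>\<^sub>m 1\<^sub>m n) * M + (M * poly_mat n p M) * M"
    unfolding scalar IH ..
  also have "\<dots> = poly_mat n (pCons a p) M * M"
    unfolding poly_mat_pCons[OF M] by (rule add_mult_distrib_mat[symmetric]) (use M P in auto)
  finally show ?case .
qed (use M in simp)

lemma poly_mat_transpose:
  assumes M: "M \<in> carrier_mat n n"
  shows "poly_mat n p (transpose_mat M) = transpose_mat (poly_mat n p M)"
proof (induct p rule: pCons_induct)
  case (pCons a p)
  have P: "poly_mat n p M \<in> carrier_mat n n"
    using M by auto
  have Mt: "transpose_mat M \<in> carrier_mat n n"
    using M by auto
  show ?case
    unfolding poly_mat_pCons[OF M] poly_mat_pCons[OF Mt] pCons
    unfolding transpose_mult[OF P M, symmetric] poly_mat_commute[OF M]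
    by (intro eq_matI) (use M P in auto)
qed (auto intro!: eq_matI)

lemma poly_mat_ls_p_Suc_Suc:
  assumes M: "M \<in> carrier_mat n n"
  shows "poly_mat n (ls_p a x (Suc (Suc i))) M =
    M * poly_mat n (ls_p a x (Suc i)) M - a (Suc i) \<cdot>\<^sub>m poly_mat n (ls_p a x (Suc i)) M
      - x (Suc i) \<cdot>\<^sub>m poly_mat n (ls_p a x i) M"
proof -
  have rec: "ls_p a x (Suc (Suc i)) =
      pCons 0 (ls_p a x (Suc i)) + Polynomial.smult (- a (Suc i)) (ls_p a x (Suc i))
        + Polynomial.smult (- x (Suc i)) (ls_p a x i)"
    by (simp add: mult_pCons_left algebra_simps)
  show ?thesis
    unfolding rec poly_mat_add[OF M] poly_mat_smult[OF M] poly_mat_pCons[OF M]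
    by (intro eq_matI) (use M in auto)
qed

section \<open>Similarity, trace and matrix units\<close>

lemma similar_mat_wit_0:
  assumes "similar_mat_wit A B P Q" and "A \<in> carrier_mat n n"
  shows "similar_mat_wit (0\<^sub>m n n) (0\<^sub>m n n) P Q"
  using similar_mat_witD2[OF assms(2,1)] by (intro similar_mat_witI) auto

lemma similar_mat_wit_1:
  assumes "similar_mat_wit A B P Q" and "A \<in> carrier_mat n n"
  shows "similar_mat_wit (1\<^sub>m n) (1\<^sub>m n) P Q"
  using similar_mat_witD2[OF assms(2,1)] by (intro similar_mat_witI) auto

lemma similar_mat_wit_same_dim:
  assumes "similar_mat_wit A B P Q" and "similar_mat_wit A' B' P Q"
  shows "A' \<in> carrier_mat (dim_row A) (dim_row A)"
  using similar_mat_witD(6)[OF refl assms(1)] similar_mat_witD(4,6)[OF refl assms(2)]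
  unfolding carrier_mat_def by simp

lemma similar_mat_wit_add:
  assumes AB: "similar_mat_wit A B P Q" and AB': "similar_mat_wit A' B' P Q"
  shows "similar_mat_wit (A + A') (B + B') P Q"
proof -
  define n where "n = dim_row A"
  note s = similar_mat_witD[OF n_def AB]
    and s' = similar_mat_witD2[OF similar_mat_wit_same_dim[OF AB AB', folded n_def] AB']
  have "P * (B + B') * Q = (P * B + P * B') * Q"
    using s s' by (simp add: mult_add_distrib_mat[of P n n B n B'])
  also have "\<dots> = A + A'"
    using s s' by (simp add: add_mult_distrib_mat[of _ n n _ Q n])
  finally show ?thesis
    using s s' by (intro similar_mat_witI) auto
qed

lemma similar_mat_wit_mult:
  assumes AB: "similar_mat_wit A B P Q" and AB': "similar_mat_wit A' B' P Q"
  shows "similar_mat_wit (A * A') (B * B') P Q"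
proof -
  define n where "n = dim_row A"
  note s = similar_mat_witD[OF n_def AB]
    and s' = similar_mat_witD2[OF similar_mat_wit_same_dim[OF AB AB', folded n_def] AB']
  have cancel: "Q * (P * X) = X" if "X \<in> carrier_mat n n" for X
    using s that by (simp add: assoc_mult_mat[symmetric, of Q n n P n X n])
  have "A * A' = P * (B * B') * Q"
    using s s' cancel by (simp add: assoc_mult_mat[of _ n n _ n _ n])
  then show ?thesis
    using s s' by (intro similar_mat_witI) auto
qed

lemma similar_mat_wit_poly_mat:
  assumes AB: "similar_mat_wit A B P Q" and A: "A \<in> carrier_mat n n"
  shows "similar_mat_wit (poly_mat n p A) (poly_mat n p B) P Q"
proof (induct p rule: pCons_induct)
  case 0
  show ?case
    using similar_mat_wit_0[OF AB A] by simp
next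
  case (pCons a p)
  have B: "B \<in> carrier_mat n n"
    using similar_mat_witD2[OF A AB] by simp
  have "similar_mat_wit (a \<cdot>\<^sub>m 1\<^sub>m n) (a \<cdot>\<^sub>m 1\<^sub>m n) P Q"
    by (rule similar_mat_wit_smult[OF similar_mat_wit_1[OF AB A]])
  moreover have "similar_mat_wit (A * poly_mat n p A) (B * poly_mat n p B) P Q"
    by (rule similar_mat_wit_mult[OF AB pCons(2)])
  ultimately show ?case
    unfolding poly_mat_pCons[OF A] poly_mat_pCons[OF B] by (rule similar_mat_wit_add)
qed

lemma similar_mat_wit_eq_iff:
  assumes "similar_mat_wit A B P Q" and "similar_mat_wit A' B' P Q"
  shows "A = A' \<longleftrightarrow> B = B'"
  using similar_mat_witD[OF refl assms(1)] similar_mat_witD[OF refl assms(2)]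
    similar_mat_witD[OF refl similar_mat_wit_sym[OF assms(1)]]
    similar_mat_witD[OF refl similar_mat_wit_sym[OF assms(2)]]
  by metis

lemma mat_trace_smult: "X \<in> carrier_mat n n \<Longrightarrow> mat_trace (c \<cdot>\<^sub>m X) = c * mat_trace X"
  by (simp add: mat_trace_def sum_distrib_left)

lemma mat_trace_mult_commute:
  assumes X: "X \<in> carrier_mat n m" and Y: "Y \<in> carrier_mat m n"
  shows "mat_trace (X * Y) = mat_trace (Y * X)"
proof -
  have "mat_trace (X * Y) = (\<Sum>i<n. \<Sum>k<m. X $$ (i, k) * Y $$ (k, i))"
    using X Y by (simp add: mat_trace_def scalar_prod_def atLeast0LessThan)
  also have "\<dots> = (\<Sum>k<m. \<Sum>i<n. Y $$ (k, i) * X $$ (i, k))"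
    by (subst sum.swap) (simp add: ac_simps)
  also have "\<dots> = mat_trace (Y * X)"
    using X Y by (simp add: mat_trace_def scalar_prod_def atLeast0LessThan)
  finally show ?thesis .
qed

lemma mat_trace_similar:
  assumes AB: "similar_mat_wit A B P Q"
  shows "mat_trace A = mat_trace B"
proof -
  define n where "n = dim_row A"
  note s = similar_mat_witD[OF n_def AB]
  have "mat_trace A = mat_trace (Q * (P * B))"
    unfolding s(3) by (rule mat_trace_mult_commute) (use s in auto)
  also have "Q * (P * B) = B"
    using s by (simp add: assoc_mult_mat[symmetric, of Q n n P n B n])
  finally show ?thesis .
qed

definition matrix_unit :: "nat \<Rightarrow> nat \<Rightarrow> nat \<Rightarrow> 'a :: zero_neq_one mat" where
  "matrix_unit n i j = mat n n (\<lambda>(r, c). if r = i \<and> c = j then 1 else 0)"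

lemma matrix_unit_carrier [simp]: "matrix_unit n i j \<in> carrier_mat n n"
  by (simp add: matrix_unit_def)

lemma index_matrix_unit [simp]:
  "r < n \<Longrightarrow> c < n \<Longrightarrow> matrix_unit n i j $$ (r, c) = (if r = i \<and> c = j then 1 else 0)"
  "dim_row (matrix_unit n i j) = n" "dim_col (matrix_unit n i j) = n"
  by (simp_all add: matrix_unit_def)

lemma matrix_unit_mult:
  fixes X :: "'a :: semiring_1 mat"
  assumes "X \<in> carrier_mat n n" and "i < n" and "j < n"
  shows "matrix_unit n i j * X = mat n n (\<lambda>(r, c). if r = i then X $$ (j, c) else 0)"
  by (rule eq_matI)
    (use assms in \<open>auto simp: scalar_prod_def if_distrib[of "\<lambda>z. z * _"] cong: if_cong\<close>)

lemma mult_matrix_unit: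
  fixes X :: "'a :: semiring_1 mat"
  assumes "X \<in> carrier_mat n n" and "i < n" and "j < n"
  shows "X * matrix_unit n i j = mat n n (\<lambda>(r, c). if c = j then X $$ (r, i) else 0)"
  by (rule eq_matI)
    (use assms in \<open>auto simp: scalar_prod_def if_distrib[of "\<lambda>z. _ * z"] cong: if_cong\<close>)

lemma matrix_unit_mult_matrix_unit:
  fixes X :: "'a :: semiring_1 mat"
  assumes "X \<in> carrier_mat n n" and "i < n" and "j < n"
  shows "matrix_unit n i i * X * matrix_unit n j j = X $$ (i, j) \<cdot>\<^sub>m matrix_unit n i j"
  using assms by (auto simp: matrix_unit_mult mult_matrix_unit intro!: eq_matI)

lemma index_mult_matrix_unit_mult:
  fixes X Y :: "'a :: semiring_1 mat"
  assumes "X \<in> carrier_mat n n" and "Y \<in> carrier_mat n n" and "j < n" and "k < n"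
    and "r < n" and "c < n"
  shows "(X * matrix_unit n j k * Y) $$ (r, c) = X $$ (r, j) * Y $$ (k, c)"
  using assms
  by (auto simp: mult_matrix_unit scalar_prod_def if_distrib[of "\<lambda>z. z * _"] cong: if_cong)

lemma smult_matrix_unit_eq_0_iff:
  fixes c :: "'a :: semiring_1"
  assumes "i < n" and "j < n"
  shows "c \<cdot>\<^sub>m matrix_unit n i j = 0\<^sub>m n n \<longleftrightarrow> c = 0"
proof
  assume "c \<cdot>\<^sub>m matrix_unit n i j = 0\<^sub>m n n"
  then have "(c \<cdot>\<^sub>m matrix_unit n i j) $$ (i, j) = 0"
    using assms by simp
  then show "c = 0"
    using assms by simp
qed (auto intro!: eq_matI)

lemma mat_trace_matrix_unit_mult:
  fixes X :: "'a :: comm_ring_1 mat"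
  assumes "X \<in> carrier_mat n n" and "i < n" and "j < n"
  shows "mat_trace (matrix_unit n i j * X) = X $$ (j, i)"
  using assms by (simp add: matrix_unit_mult mat_trace_def)

section \<open>Primitive idempotents\<close>

lemma smult_mat_mult_mat_vec:
  fixes F :: "'a :: comm_semiring_0 mat"
  assumes "F \<in> carrier_mat n m" and "v \<in> carrier_vec m"
  shows "(c \<cdot>\<^sub>m F) *\<^sub>v v = c \<cdot>\<^sub>v (F *\<^sub>v v)"
  by (rule eq_vecI) (use assms in \<open>auto simp: scalar_prod_def sum_distrib_left ac_simps\<close>)

lemma foldr_shifted_carrier:
  assumes "M \<in> carrier_mat n n"
  shows "foldr (\<lambda>j B. (M - \<theta> j \<cdot>\<^sub>m 1\<^sub>m n) * B) ks (1\<^sub>m n) \<in> carrier_mat n n"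
  by (induct ks) (use assms in auto)

lemma prim_idem_carrier [simp]:
  assumes "M \<in> carrier_mat (Suc d) (Suc d)"
  shows "prim_idem d M \<theta> i \<in> carrier_mat (Suc d) (Suc d)"
  unfolding prim_idem_def by (intro smult_carrier_mat foldr_shifted_carrier assms)

lemma foldr_shifted_mult_eigenvector:
  fixes M :: "'a :: field mat"
  assumes M: "M \<in> carrier_mat n n" and v: "v \<in> carrier_vec n" and Mv: "M *\<^sub>v v = l \<cdot>\<^sub>v v"
  shows "foldr (\<lambda>j B. (M - \<theta> j \<cdot>\<^sub>m 1\<^sub>m n) * B) ks (1\<^sub>m n) *\<^sub>v v =
    (\<Prod>j\<leftarrow>ks. l - \<theta> j) \<cdot>\<^sub>v v"
proof (induct ks)
  case (Cons k ks)
  let ?F = "foldr (\<lambda>j B. (M - \<theta> j \<cdot>\<^sub>m 1\<^sub>m n) * B) ks (1\<^sub>m n)"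
  have F: "?F \<in> carrier_mat n n"
    by (rule foldr_shifted_carrier[OF M])
  have Mk: "M - \<theta> k \<cdot>\<^sub>m 1\<^sub>m n \<in> carrier_mat n n"
    by (simp add: minus_carrier_mat)
  have shift: "(M - \<theta> k \<cdot>\<^sub>m 1\<^sub>m n) *\<^sub>v v = (l - \<theta> k) \<cdot>\<^sub>v v"
    using M v by (auto simp: minus_mult_distrib_mat_vec smult_mat_mult_mat_vec Mv
        algebra_simps intro!: eq_vecI)
  have "((M - \<theta> k \<cdot>\<^sub>m 1\<^sub>m n) * ?F) *\<^sub>v v =
      (M - \<theta> k \<cdot>\<^sub>m 1\<^sub>m n) *\<^sub>v ((\<Prod>j\<leftarrow>ks. l - \<theta> j) \<cdot>\<^sub>v v)"
    by (subst assoc_mult_mat_vec[OF Mk F v]) (simp add: Cons)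
  also have "\<dots> = ((l - \<theta> k) * (\<Prod>j\<leftarrow>ks. l - \<theta> j)) \<cdot>\<^sub>v v"
    unfolding mult_mat_vec[OF Mk v] shift smult_smult_assoc by (simp add: mult.commute)
  finally show ?case
    by simp
qed (use v in simp)

lemma prim_idem_mult_eigenvector:
  fixes M :: "'a :: field mat"
  assumes M: "M \<in> carrier_mat (Suc d) (Suc d)" and inj: "inj_on \<theta> {0..d}"
    and i: "i \<le> d" and j: "j \<le> d"
    and v: "v \<in> carrier_vec (Suc d)" and Mv: "M *\<^sub>v v = \<theta> j \<cdot>\<^sub>v v"
  shows "prim_idem d M \<theta> i *\<^sub>v v = (if i = j then v else 0\<^sub>v (Suc d))"
proof -
  let ?ks = "filter (\<lambda>k. k \<noteq> i) [0..<Suc d]"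
  let ?F = "foldr (\<lambda>k B. (M - \<theta> k \<cdot>\<^sub>m 1\<^sub>m (Suc d)) * B) ?ks (1\<^sub>m (Suc d))"
  have F: "?F \<in> carrier_mat (Suc d) (Suc d)"
    by (rule foldr_shifted_carrier[OF M])
  have "set ?ks = {0..d} - {i}"
    by auto
  then have ks: "(\<Prod>k\<leftarrow>?ks. f k) = (\<Prod>k\<in>{0..d} - {i}. f k)" for f :: "nat \<Rightarrow> 'a"
    using prod.distinct_set_conv_list[of ?ks f] by simp
  have "prim_idem d M \<theta> i *\<^sub>v v =
      ((\<Prod>k\<in>{0..d} - {i}. \<theta> j - \<theta> k) / (\<Prod>k\<in>{0..d} - {i}. \<theta> i - \<theta> k)) \<cdot>\<^sub>v v"
    unfolding prim_idem_def smult_mat_mult_mat_vec[OF F v]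
      foldr_shifted_mult_eigenvector[OF M v Mv] ks
    by (auto intro!: eq_vecI)
  also have "\<dots> = (if i = j then v else 0\<^sub>v (Suc d))"
  proof (cases "i = j")
    case True
    have "(\<Prod>k\<in>{0..d} - {i}. \<theta> i - \<theta> k) \<noteq> 0"
      using inj i by (auto simp: inj_on_def)
    then show ?thesis
      using True by (auto intro!: eq_vecI)
  next
    case False
    have zero: "(\<Prod>k\<in>{0..d} - {i}. \<theta> j - \<theta> k) = 0"
      by (subst prod_zero_iff) (use False j in auto)
    show ?thesis
      unfolding zero using False v by (auto intro!: eq_vecI)
  qed
  finally show ?thesis .
qed

lemma prim_idem_mult_eigenbasis:
  fixes M W :: "'a :: field mat"
  assumes M: "M \<in> carrier_mat (Suc d) (Suc d)" and inj: "inj_on \<theta> {0..d}"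
    and W: "W \<in> carrier_mat (Suc d) (Suc d)"
    and eig: "\<And>c. c \<le> d \<Longrightarrow> M *\<^sub>v col W c = \<theta> c \<cdot>\<^sub>v col W c"
    and i: "i \<le> d"
  shows "prim_idem d M \<theta> i * W = W * matrix_unit (Suc d) i i"
proof (rule eq_matI)
  fix r c
  assume "r < dim_row (W * matrix_unit (Suc d) i i)" and "c < dim_col (W * matrix_unit (Suc d) i i)"
  then have r: "r \<le> d" and c: "c \<le> d"
    using W by auto
  have "(prim_idem d M \<theta> i * W) $$ (r, c) = (prim_idem d M \<theta> i *\<^sub>v col W c) $ r"
    using W r c by (simp add: carrier_matD[OF prim_idem_carrier[OF M]])
  also have "\<dots> = (W * matrix_unit (Suc d) i i) $$ (r, c)"
    using prim_idem_mult_eigenvector[OF M inj i c _ eig[OF c]] W r c i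
      col_dim[of W c] carrier_vecI[of "col W c"]
    by (simp add: mult_matrix_unit)
  finally show "(prim_idem d M \<theta> i * W) $$ (r, c) = (W * matrix_unit (Suc d) i i) $$ (r, c)" .
qed (use W in \<open>auto simp: carrier_matD[OF prim_idem_carrier[OF M]]\<close>)

text \<open>If W v = 0, then 0 = E_i W v = v_i (col W i) for every i, so v = 0.\<close>

lemma eigenbasis_det_nonzero:
  fixes M W :: "'a :: field mat"
  assumes M: "M \<in> carrier_mat (Suc d) (Suc d)" and inj: "inj_on \<theta> {0..d}"
    and W: "W \<in> carrier_mat (Suc d) (Suc d)"
    and eig: "\<And>c. c \<le> d \<Longrightarrow> M *\<^sub>v col W c = \<theta> c \<cdot>\<^sub>v col W c"
    and nonzero: "\<And>c. c \<le> d \<Longrightarrow> col W c \<noteq> 0\<^sub>v (Suc d)"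
  shows "det W \<noteq> 0"
proof
  assume "det W = 0"
  then obtain v where v: "v \<in> carrier_vec (Suc d)" "v \<noteq> 0\<^sub>v (Suc d)" "W *\<^sub>v v = 0\<^sub>v (Suc d)"
    using det_0_iff_vec_prod_zero[OF W] by auto
  have "v $ i = 0" if i: "i \<le> d" for i
  proof -
    have "\<exists>r\<le>d. W $$ (r, i) \<noteq> 0"
    proof (rule ccontr)
      assume "\<not> (\<exists>r\<le>d. W $$ (r, i) \<noteq> 0)"
      then have "col W i = 0\<^sub>v (Suc d)"
        using W i by (auto simp: less_Suc_eq_le intro!: eq_vecI)
      then show False
        using nonzero[OF i] by simp
    qed
    then obtain r where r: "r \<le> d" "W $$ (r, i) \<noteq> 0"
      by blast
    have "(W * matrix_unit (Suc d) i i) *\<^sub>v v = prim_idem d M \<theta> i *\<^sub>v (W *\<^sub>v v)"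
      using prim_idem_mult_eigenbasis[OF M inj W eig i] prim_idem_carrier[OF M] W v
      by (metis assoc_mult_mat_vec)
    then have "((W * matrix_unit (Suc d) i i) *\<^sub>v v) $ r = 0"
      using r v(3) row_carrier_vec[OF _ prim_idem_carrier[OF M], of r]
      by (simp add: carrier_matD[OF prim_idem_carrier[OF M]])
    then show ?thesis
      using W v r i by (auto simp: mult_matrix_unit scalar_prod_def
          if_distrib[of "\<lambda>z. z * _"] split: if_splits cong: if_cong)
  qed
  then show False
    using v by (auto simp: less_Suc_eq_le intro!: eq_vecI)
qed

lemma idem_ordering_similar_matrix_units:
  fixes M :: "'a :: field mat"
  assumes M: "M \<in> carrier_mat (Suc d) (Suc d)" and ord: "idem_ordering d M E"
  obtains W V where "\<And>i. i \<le> d \<Longrightarrow> similar_mat_wit (E i) (matrix_unit (Suc d) i i) W V"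
proof -
  let ?n = "Suc d"
  obtain \<theta> where inj: "inj_on \<theta> {0..d}" and "\<And>i. i \<le> d \<Longrightarrow> eigenvalue M (\<theta> i)"
    and E: "\<And>i. i \<le> d \<Longrightarrow> E i = prim_idem d M \<theta> i"
    using ord unfolding idem_ordering_def by blast
  then have "\<forall>c. \<exists>w. c \<le> d \<longrightarrow> w \<in> carrier_vec ?n \<and> w \<noteq> 0\<^sub>v ?n \<and> M *\<^sub>v w = \<theta> c \<cdot>\<^sub>v w"
    using M unfolding eigenvalue_def eigenvector_def by auto
  then obtain w where
    w: "\<And>c. c \<le> d \<Longrightarrow> w c \<in> carrier_vec ?n \<and> w c \<noteq> 0\<^sub>v ?n \<and> M *\<^sub>v w c = \<theta> c \<cdot>\<^sub>v w c"
    by metis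
  define W where "W = mat ?n ?n (\<lambda>(r, c). w c $ r)"
  have W: "W \<in> carrier_mat ?n ?n"
    by (simp add: W_def)
  have col: "col W c = w c" if "c \<le> d" for c
    using w[OF that] that by (auto simp: W_def intro!: eq_vecI)
  have EW: "E i * W = W * matrix_unit ?n i i" if "i \<le> d" for i
    using prim_idem_mult_eigenbasis[OF M inj W _ that] E[OF that] w col by simp
  have "det W \<noteq> 0"
    by (rule eigenbasis_det_nonzero[OF M inj W]) (use w col in simp_all)
  from det_non_zero_imp_unit[OF W this, unfolded Units_def, of "()"]
  obtain V where V: "V \<in> carrier_mat ?n ?n" and VW: "V * W = 1\<^sub>m ?n" and WV: "W * V = 1\<^sub>m ?n"
    by (auto simp: ring_mat_def)
  show thesis
  proof (rule that, rule similar_mat_witI[OF WV VW])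
    fix i assume i: "i \<le> d"
    have Ei: "E i \<in> carrier_mat ?n ?n"
      using M E[OF i] by simp
    have "E i = E i * W * V"
      using Ei W V WV by (simp add: assoc_mult_mat[of _ ?n ?n _ ?n _ ?n])
    then show "E i = W * matrix_unit ?n i i * V"
      unfolding EW[OF i] .
  qed (use W V M E in auto)
qed

section \<open>Tridiagonal matrices\<close>

definition tridiagonal_mat :: "nat \<Rightarrow> 'a :: zero mat \<Rightarrow> bool" where
  "tridiagonal_mat n T \<longleftrightarrow>
     T \<in> carrier_mat n n \<and> (\<forall>r<n. \<forall>c<n. r + 1 < c \<or> c + 1 < r \<longrightarrow> T $$ (r, c) = 0)"

lemma tridiagonal_mat_transpose:
  "tridiagonal_mat n T \<Longrightarrow> tridiagonal_mat n (transpose_mat T)"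
  by (auto simp: tridiagonal_mat_def)

text \<open>Column i + 1 of a tridiagonal T is supported on rows i, i + 1, i + 2; with a and x read
  off T, the recurrence of ls_p cancels the first two entries of T p_(i+1)(T) e_0.\<close>

lemma tridiagonal_ls_p_col:
  fixes T :: "'a :: field mat"
  assumes tri: "tridiagonal_mat n T"
    and a: "\<And>k. k < n \<Longrightarrow> a k = T $$ (k, k)"
    and x: "\<And>k. 0 < k \<Longrightarrow> k < n \<Longrightarrow> x k = T $$ (k, k - 1) * T $$ (k - 1, k)"
  shows "i < n \<Longrightarrow> r < n \<Longrightarrow>
    poly_mat n (ls_p a x i) T $$ (r, 0) = (if r = i then \<Prod>k\<in>{1..i}. T $$ (k, k - 1) else 0)"
proof (induction i arbitrary: r rule: induct_nat_012)
  case 0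
  then show ?case
    using tri by (simp add: tridiagonal_mat_def poly_mat_1)
next
  case 1
  have T: "T \<in> carrier_mat n n"
    using tri by (simp add: tridiagonal_mat_def)
  have "ls_p a x 1 = pCons (- a 0) 1"
    by (simp add: one_pCons)
  then have "poly_mat n (ls_p a x 1) T $$ (r, 0) = T $$ (r, 0) - (if r = 0 then a 0 else 0)"
    using T 1 by (simp add: poly_mat_pCons poly_mat_1)
  then show ?case
    using 1 tri a[of 0] by (auto simp: tridiagonal_mat_def)
next
  case (ge2 m)
  let ?g = "\<lambda>i. \<Prod>k\<in>{1..i}. T $$ (k, k - 1)"
  let ?P = "\<lambda>i. poly_mat n (ls_p a x i) T"
  have T: "T \<in> carrier_mat n n"
    using tri by (simp add: tridiagonal_mat_def)
  have P1: "?P (Suc m) $$ (k, 0) = (if k = Suc m then ?g (Suc m) else 0)" if "k < n" for k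
    using ge2 that by simp
  have P0: "?P m $$ (k, 0) = (if k = m then ?g m else 0)" if "k < n" for k
    using ge2 that by simp
  have "(T * ?P (Suc m)) $$ (r, 0) = (\<Sum>k\<in>{0..<n}. T $$ (r, k) * ?P (Suc m) $$ (k, 0))"
    using T ge2.prems by (simp add: scalar_prod_def)
  also have "\<dots> = (\<Sum>k\<in>{0..<n}. if k = Suc m then T $$ (r, Suc m) * ?g (Suc m) else 0)"
    by (rule sum.cong) (auto simp: P1)
  finally have "(T * ?P (Suc m)) $$ (r, 0) = T $$ (r, Suc m) * ?g (Suc m)"
    using ge2.prems by simp
  then have P2: "?P (Suc (Suc m)) $$ (r, 0) =
      T $$ (r, Suc m) * ?g (Suc m) - a (Suc m) * ?P (Suc m) $$ (r, 0) - x (Suc m) * ?P m $$ (r, 0)"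
    unfolding poly_mat_ls_p_Suc_Suc[OF T] using T ge2.prems by simp
  have g: "?g (Suc k) = ?g k * T $$ (Suc k, k)" for k
    by (simp add: prod.cl_ivl_Suc)
  consider "r = Suc (Suc m)" | "r = Suc m" | "r = m" | "r < m \<or> Suc (Suc m) < r"
    by linarith
  then show ?case
  proof cases
    case 1
    then show ?thesis
      using P2 P1 P0 ge2.prems g[of "Suc m"] by (simp add: mult.commute)
  next
    case 2
    then show ?thesis
      using P2 P1 P0 ge2.prems a[of "Suc m"] by simp
  next
    case 3
    then show ?thesis
      using P2 P1 P0 ge2.prems x[of "Suc m"] g[of m] by (simp add: algebra_simps)
  next
    case 4
    then show ?thesis
      using P2 P1 P0 ge2.prems tri by (auto simp: tridiagonal_mat_def)
  qed
qed

lemma tridiagonal_ls_p_row: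
  fixes T :: "'a :: field mat"
  assumes tri: "tridiagonal_mat n T"
    and a: "\<And>k. k < n \<Longrightarrow> a k = T $$ (k, k)"
    and x: "\<And>k. 0 < k \<Longrightarrow> k < n \<Longrightarrow> x k = T $$ (k, k - 1) * T $$ (k - 1, k)"
    and i: "i < n" and c: "c < n"
  shows "poly_mat n (ls_p a x i) T $$ (0, c) = (if c = i then \<Prod>k\<in>{1..i}. T $$ (k - 1, k) else 0)"
proof -
  have T: "T \<in> carrier_mat n n"
    using tri by (simp add: tridiagonal_mat_def)
  have "poly_mat n (ls_p a x i) T $$ (0, c) = poly_mat n (ls_p a x i) (transpose_mat T) $$ (c, 0)"
    using T i c by (simp add: poly_mat_transpose)
  also have "\<dots> = (if c = i then \<Prod>k\<in>{1..i}. transpose_mat T $$ (k, k - 1) else 0)"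
    by (rule tridiagonal_ls_p_col[OF tridiagonal_mat_transpose[OF tri]])
      (use T a x i c in \<open>auto simp: mult.commute\<close>)
  also have "(\<Prod>k\<in>{1..i}. transpose_mat T $$ (k, k - 1)) = (\<Prod>k\<in>{1..i}. T $$ (k - 1, k))"
    using T i by (intro prod.cong) auto
  finally show ?thesis .
qed

lemma tridiagonal_ls_p_sandwich:
  fixes T :: "'a :: field mat"
  assumes tri: "tridiagonal_mat n T"
    and a: "\<And>k. k < n \<Longrightarrow> a k = T $$ (k, k)"
    and x: "\<And>k. 0 < k \<Longrightarrow> k < n \<Longrightarrow> x k = T $$ (k, k - 1) * T $$ (k - 1, k)"
    and i: "i < n"
  shows "poly_mat n (ls_p a x i) T * matrix_unit n 0 0 * poly_mat n (ls_p a x i) T =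
    (\<Prod>k\<in>{1..i}. x k) \<cdot>\<^sub>m matrix_unit n i i"
proof (rule eq_matI)
  let ?P = "poly_mat n (ls_p a x i) T"
  have T: "T \<in> carrier_mat n n"
    using tri by (simp add: tridiagonal_mat_def)
  fix r c
  assume "r < dim_row ((\<Prod>k\<in>{1..i}. x k) \<cdot>\<^sub>m matrix_unit n i i)"
    and "c < dim_col ((\<Prod>k\<in>{1..i}. x k) \<cdot>\<^sub>m matrix_unit n i i)"
  then have r: "r < n" and c: "c < n"
    by auto
  have "(\<Prod>k\<in>{1..i}. T $$ (k, k - 1)) * (\<Prod>k\<in>{1..i}. T $$ (k - 1, k)) = (\<Prod>k\<in>{1..i}. x k)"
    unfolding prod.distrib[symmetric] using i x by (intro prod.cong) auto
  moreover have "(?P * matrix_unit n 0 0 * ?P) $$ (r, c) = ?P $$ (r, 0) * ?P $$ (0, c)"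
    using T i r c by (intro index_mult_matrix_unit_mult) auto
  ultimately show "(?P * matrix_unit n 0 0 * ?P) $$ (r, c) =
      ((\<Prod>k\<in>{1..i}. x k) \<cdot>\<^sub>m matrix_unit n i i) $$ (r, c)"
    using tridiagonal_ls_p_col[OF tri a x i r] tridiagonal_ls_p_row[OF tri a x i c] r c by simp
qed (use tri in \<open>auto simp: tridiagonal_mat_def\<close>)

section \<open>Leonard systems in a basis of eigenvectors of \<open>A\<^sup>*\<close>\<close>

lemma similar_matrix_units_sandwich:
  assumes AB: "similar_mat_wit A B P Q"
    and F: "similar_mat_wit F (matrix_unit n i i) P Q"
    and G: "similar_mat_wit G (matrix_unit n j j) P Q"
    and i: "i < n" and j: "j < n"
  shows "similar_mat_wit (F * A * G) (B $$ (i, j) \<cdot>\<^sub>m matrix_unit n i j) P Q"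
proof -
  have "B \<in> carrier_mat n n"
    using similar_mat_wit_same_dim[OF similar_mat_wit_sym[OF F] similar_mat_wit_sym[OF AB]] by simp
  then have "matrix_unit n i i * B * matrix_unit n j j = B $$ (i, j) \<cdot>\<^sub>m matrix_unit n i j"
    using i j by (rule matrix_unit_mult_matrix_unit)
  then show ?thesis
    using similar_mat_wit_mult[OF similar_mat_wit_mult[OF F AB] G] by simp
qed

lemma leonard_system_dual_basis:
  assumes "leonard_system d A As E Es"
  obtains B W V where "similar_mat_wit A B W V"
    and "\<And>i. i \<le> d \<Longrightarrow> similar_mat_wit (Es i) (matrix_unit (Suc d) i i) W V"
proof -
  let ?n = "Suc d"
  have A: "A \<in> carrier_mat ?n ?n" and As: "As \<in> carrier_mat ?n ?n" and ord: "idem_ordering d As Es"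
    using assms by (auto simp: leonard_system_def mult_free_def)
  obtain W V where EsU: "\<And>i. i \<le> d \<Longrightarrow> similar_mat_wit (Es i) (matrix_unit ?n i i) W V"
    using idem_ordering_similar_matrix_units[OF As ord] by blast
  note s = similar_mat_witD2[OF matrix_unit_carrier similar_mat_wit_sym[OF EsU[of 0]]]
  have "W * (V * A) = A"
    using A s by (simp add: assoc_mult_mat[symmetric, of W ?n ?n V ?n A ?n])
  then have "A = W * (V * A * W) * V"
    using A s by (simp add: assoc_mult_mat[of _ ?n ?n _ ?n _ ?n])
  then have "similar_mat_wit A (V * A * W) W V"
    using A s by (intro similar_mat_witI[OF s(2) s(1)]) auto
  then show thesis
    using that EsU by blast
qed

context
  fixes d :: nat and A B W V :: "'a :: field mat" and Es :: "nat \<Rightarrow> 'a mat"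
  assumes AB: "similar_mat_wit A B W V" and A: "A \<in> carrier_mat (Suc d) (Suc d)"
    and EsU: "\<And>i. i \<le> d \<Longrightarrow> similar_mat_wit (Es i) (matrix_unit (Suc d) i i) W V"
begin

lemma dual_basis_carrier: "B \<in> carrier_mat (Suc d) (Suc d)"
  using similar_mat_witD2[OF A AB] by simp

lemma dual_basis_Es_A_Es_eq_0_iff:
  assumes "i \<le> d" and "j \<le> d"
  shows "Es i * A * Es j = 0\<^sub>m (Suc d) (Suc d) \<longleftrightarrow> B $$ (i, j) = 0"
  using similar_mat_wit_eq_iff[OF similar_matrix_units_sandwich[OF AB EsU EsU]
      similar_mat_wit_0[OF AB A]]
    smult_matrix_unit_eq_0_iff[of i "Suc d" j "B $$ (i, j)"] assms by auto

lemma dual_basis_ls_a: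
  assumes "k \<le> d"
  shows "ls_a A Es k = B $$ (k, k)"
  unfolding ls_a_def mat_trace_similar[OF similar_mat_wit_mult[OF EsU[OF assms] AB]]
  using assms dual_basis_carrier by (simp add: mat_trace_matrix_unit_mult)

lemma dual_basis_ls_x:
  assumes "0 < k" and "k \<le> d"
  shows "ls_x A Es k = B $$ (k, k - 1) * B $$ (k - 1, k)"
proof -
  note B = dual_basis_carrier
  have "similar_mat_wit (Es k * A * Es (k - 1) * A)
      ((B $$ (k, k - 1) \<cdot>\<^sub>m matrix_unit (Suc d) k (k - 1)) * B) W V"
    using similar_mat_wit_mult[OF similar_matrix_units_sandwich[OF AB EsU EsU] AB] assms by simp
  then show ?thesis
    unfolding ls_x_def using assms B
    by (simp add: mat_trace_similar mult_smult_assoc_mat[OF matrix_unit_carrier B]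
        mat_trace_smult[OF mult_carrier_mat[OF matrix_unit_carrier B]] mat_trace_matrix_unit_mult)
qed

context
  fixes As :: "'a mat" and E :: "nat \<Rightarrow> 'a mat"
  assumes leonard: "leonard_system d A As E Es"
begin

lemma dual_basis_tridiagonal: "tridiagonal_mat (Suc d) B"
  and dual_basis_off_diagonal_nonzero:
    "0 < k \<Longrightarrow> k \<le> d \<Longrightarrow> B $$ (k, k - 1) \<noteq> 0 \<and> B $$ (k - 1, k) \<noteq> 0"
proof -
  have zero: "\<And>i j. i \<le> d \<Longrightarrow> j \<le> d \<Longrightarrow> i + 1 < j \<or> j + 1 < i \<Longrightarrow>
      Es i * A * Es j = 0\<^sub>m (Suc d) (Suc d)"
    and nonzero: "\<And>i j. i \<le> d \<Longrightarrow> j \<le> d \<Longrightarrow> i = j + 1 \<or> j = i + 1 \<Longrightarrow>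
      Es i * A * Es j \<noteq> 0\<^sub>m (Suc d) (Suc d)"
    using leonard unfolding leonard_system_def by blast+
  show "tridiagonal_mat (Suc d) B"
    using dual_basis_carrier zero dual_basis_Es_A_Es_eq_0_iff
    by (auto simp: tridiagonal_mat_def less_Suc_eq_le)
  show "B $$ (k, k - 1) \<noteq> 0 \<and> B $$ (k - 1, k) \<noteq> 0" if "0 < k" "k \<le> d"
    using nonzero[of k "k - 1"] nonzero[of "k - 1" k] dual_basis_Es_A_Es_eq_0_iff that by auto
qed

lemma dual_basis_ls_x_nonzero: "0 < k \<Longrightarrow> k \<le> d \<Longrightarrow> ls_x A Es k \<noteq> 0"
  using dual_basis_ls_x dual_basis_off_diagonal_nonzero by simp

lemma dual_basis_Es_eq:
  assumes i: "i \<le> d"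
  shows "Es i = (1 / (\<Prod>k\<in>{1..i}. ls_x A Es k)) \<cdot>\<^sub>m
    (poly_mat (Suc d) (ls_p (ls_a A Es) (ls_x A Es) i) A * Es 0 *
     poly_mat (Suc d) (ls_p (ls_a A Es) (ls_x A Es) i) A)"
proof -
  let ?P = "poly_mat (Suc d) (ls_p (ls_a A Es) (ls_x A Es) i)" and ?c = "\<Prod>k\<in>{1..i}. ls_x A Es k"
  have a: "\<And>k. k < Suc d \<Longrightarrow> ls_a A Es k = B $$ (k, k)"
    and x: "\<And>k. 0 < k \<Longrightarrow> k < Suc d \<Longrightarrow> ls_x A Es k = B $$ (k, k - 1) * B $$ (k - 1, k)"
    using dual_basis_ls_a dual_basis_ls_x by simp_all
  have "i < Suc d"
    using i by simp
  then have "?P B * matrix_unit (Suc d) 0 0 * ?P B = ?c \<cdot>\<^sub>m matrix_unit (Suc d) i i"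
    using tridiagonal_ls_p_sandwich[OF dual_basis_tridiagonal a x] by simp
  moreover have "similar_mat_wit (?P A * Es 0 * ?P A) (?P B * matrix_unit (Suc d) 0 0 * ?P B) W V"
    by (intro similar_mat_wit_mult similar_mat_wit_poly_mat[OF AB A] EsU) simp
  ultimately have "similar_mat_wit (?P A * Es 0 * ?P A) (?c \<cdot>\<^sub>m matrix_unit (Suc d) i i) W V"
    by simp
  then have "similar_mat_wit ((1 / ?c) \<cdot>\<^sub>m (?P A * Es 0 * ?P A))
      ((1 / ?c) \<cdot>\<^sub>m (?c \<cdot>\<^sub>m matrix_unit (Suc d) i i)) W V"
    by (rule similar_mat_wit_smult)
  moreover have "(1 / ?c) \<cdot>\<^sub>m (?c \<cdot>\<^sub>m matrix_unit (Suc d) i i) = matrix_unit (Suc d) i i"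
    using dual_basis_ls_x_nonzero i by (auto simp: prod_zero_iff intro!: eq_matI)
  ultimately show ?thesis
    using similar_mat_wit_eq_iff[OF EsU[OF i]] by simp
qed

end

end

theorem theorem8p6:
  fixes d :: nat and A As :: "'a :: field mat" and E Es :: "nat \<Rightarrow> 'a mat"
  assumes "leonard_system d A As E Es"
  shows "(\<forall>i\<in>{1..d}. ls_x A Es i \<noteq> 0) \<and>
         (\<forall>i\<le>d. Es i =
            (1 / (\<Prod>k\<in>{1..i}. ls_x A Es k)) \<cdot>\<^sub>m
              (poly_mat (Suc d) (ls_p (ls_a A Es) (ls_x A Es) i) A * Es 0 *
               poly_mat (Suc d) (ls_p (ls_a A Es) (ls_x A Es) i) A))"
proof -
  have A: "A \<in> carrier_mat (Suc d) (Suc d)"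
    using assms by (simp add: leonard_system_def mult_free_def)
  obtain B W V where AB: "similar_mat_wit A B W V"
    and EsU: "\<And>i. i \<le> d \<Longrightarrow> similar_mat_wit (Es i) (matrix_unit (Suc d) i i) W V"
    by (rule leonard_system_dual_basis[OF assms]) (rule that)
  have "ls_x A Es i \<noteq> 0" if "i \<in> {1..d}" for i
    using dual_basis_ls_x_nonzero[OF AB A EsU assms] that by simp
  then show ?thesis
    using dual_basis_Es_eq[OF AB A EsU assms] by blast
qed

end
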